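(* Let $N\ge3$, $K\ge2$, $1\le L<N-1$ be integers, $M=N(L+1)^{K-1}$, $d_m=L$ for $m\in[1:N]$ and $d_m=L+1$ for $m\in[N+1:M]$, $C=\left(\sum_{k=0}^{K-1}N^{-k}\right)^{-1}$, and $1\le D\le1/C$. Let $\mathcal{F}_D$ be the set of probability vectors $P$ on $[1:M]$ with $\frac1L\sum_{m=1}^Mp_md_m=D$ and $U$ the uniform distribution on $[1:M]$. Then $\rho^{alt}_\alpha:=\min_{P\in\mathcal{F}_D}D_\alpha(P\|U)$ equals, for $0<\alpha<\infty$, $\alpha\ne1$, $$\rho^{alt}_\alpha=\frac{1}{\alpha-1}\log\left[N\left(\frac{1-L(D-1)}{N}\right)^{\alpha}+\big(N(L+1)^{K-1}-N\big)\left(\frac{L(D-1)}{N(L+1)^{K-1}-N}\right)^{\alpha}\right]+\log N(L+1)^{K-1};$$ for $\alpha=1$, $$\rho^{alt}_1=\{1-L(D-1)\}\log\frac{1-L(D-1)}{N}+L(D-1)\log\frac{L(D-1)}{N(L+1)^{K-1}-N}+\log N(L+1)^{K-1};$$ and for $\alpha=\infty$, $$\rho^{alt}_\infty=\log\frac{1-L(D-1)}{N}+\log N(L+1)^{K-1}.$$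
   Context: Notation: $[i:j]=\{i,\dots,j\}$; natural logarithms with $0\log0=0$. Rényi divergence for probability vectors $P,U$ on $[1:M]$ with $u_m>0$: $D_\alpha(P\|U)=\frac{1}{\alpha-1}\log\sum_m p_m^\alpha u_m^{1-\alpha}$ for $0<\alpha<\infty,\alpha\ne1$; $D_1(P\|U)=\sum_m p_m\log\frac{p_m}{u_m}$; $D_\infty(P\|U)=\log\max_m\frac{p_m}{u_m}$. (Interpretation: optimal leakage–download-cost tradeoff for the paper's alternative PIR scheme with $N$ databases, $K$ messages and message length $L$.) *)

theory Defs
  imports "HOL-Analysis.Analysis"
begin

text \<open>Probability vectors on [1:M], represented as functions nat => real
  (values outside {1..M} are irrelevant).\<close>
definition prob_vec :: "nat \<Rightarrow> (nat \<Rightarrow> real) \<Rightarrow> bool" where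
  "prob_vec M P \<longleftrightarrow> (\<forall>m\<in>{1..M}. P m \<ge> 0) \<and> (\<Sum>m=1..M. P m) = 1"

definition renyi_div :: "ereal \<Rightarrow> nat \<Rightarrow> (nat \<Rightarrow> real) \<Rightarrow> (nat \<Rightarrow> real) \<Rightarrow> real" where
  "renyi_div \<alpha> M P U =
    (if \<alpha> = \<infinity> then ln (Max ((\<lambda>m. P m / U m) ` {1..M}))
     else if \<alpha> = 1 then (\<Sum>m=1..M. (if P m = 0 then 0 else P m * ln (P m / U m)))
     else 1 / (real_of_ereal \<alpha> - 1) *
            ln (\<Sum>m=1..M. P m powr real_of_ereal \<alpha> * U m powr (1 - real_of_ereal \<alpha>)))"

definition dvec :: "nat \<Rightarrow> nat \<Rightarrow> nat \<Rightarrow> real" where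
  "dvec N L m = (if m \<le> N then real L else real L + 1)"

definition feasible :: "nat \<Rightarrow> nat \<Rightarrow> nat \<Rightarrow> real \<Rightarrow> (nat \<Rightarrow> real) set" where
  "feasible N L M D = {P. prob_vec M P \<and> (1 / real L) * (\<Sum>m=1..M. P m * dvec N L m) = D}"

definition uniform :: "nat \<Rightarrow> nat \<Rightarrow> real" where
  "uniform M m = 1 / real M"

definition is_min_val :: "('a \<Rightarrow> real) \<Rightarrow> 'a set \<Rightarrow> real \<Rightarrow> bool" where
  "is_min_val f S x \<longleftrightarrow> (\<exists>P\<in>S. f P = x) \<and> (\<forall>P\<in>S. x \<le> f P)"

end

theory Submission
  imports Defs
begin

text \<open>The weights satisfy d_m = L + [m > N], so the feasible set consists of the probability
  vectors putting the fixed mass q = L(D - 1) on the tail block [N+1:M]. Averaging P over each of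
  the two blocks keeps it feasible and, by Jensen's inequality for the convex functions
  (\<alpha> - 1) x^\<alpha> and x ln x, does not increase the divergence; hence the block-uniform
  vector is optimal for finite \<alpha>. For \<alpha> = \<infinity>, some head coordinate is at least
  the head average (1 - q)/N, and the block-uniform vector attains this because D \<le> 1/C forces
  q/(M - N) \<le> (1 - q)/N: compare the series \<Sum> N^-k with the geometric series in 1/(L + 1), using N \<ge> L + 1.\<close>

lemma card_mult_mean_le_sum_convex:
  fixes h h' :: "real \<Rightarrow> real" and p :: "'i \<Rightarrow> real"
  assumes S: "finite S" "S \<noteq> {}" and p: "\<And>i. i \<in> S \<Longrightarrow> 0 \<le> p i"
    and conv: "convex_on {0<..} h"
    and deriv: "\<And>c. 0 < c \<Longrightarrow> (h has_real_derivative h' c) (at c)"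
    and tangent_at_0: "\<And>c. 0 < c \<Longrightarrow> h c - c * h' c \<le> h 0"
    \<comment> \<open>the tangents pass below h 0, as convexity on {0..} would give; so entries may vanish\<close>
  shows "card S * h (sum p S / card S) \<le> (\<Sum>i\<in>S. h (p i))"
proof (cases "sum p S = 0")
  case True
  then have "p i = 0" if "i \<in> S" for i
    using sum_nonneg_eq_0_iff[OF S(1)] p that by blast
  with True show ?thesis by simp
next
  case False
  define c where "c = sum p S / card S"
  have card: "0 < real (card S)" using S by (simp add: card_gt_0_iff)
  have "0 \<le> sum p S" by (rule sum_nonneg) (rule p)
  with False have "0 < sum p S" by linarith
  then have c: "0 < c" using card by (simp add: c_def)
  have tangent: "h c + h' c * (x - c) \<le> h x" if "0 \<le> x" for x
  proof (cases "x = 0")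
    case True
    with tangent_at_0[OF c] show ?thesis by (simp add: algebra_simps)
  next
    case False
    have "h' c * (x - c) \<le> h x - h c"
      by (rule convex_on_imp_above_tangent[OF conv])
        (use c that False deriv in \<open>auto simp: interior_open intro: has_field_derivative_at_within\<close>)
    then show ?thesis by simp
  qed
  have "card S * h c = (\<Sum>i\<in>S. h c + h' c * (p i - c))"
    using card by (simp add: sum.distrib sum_subtractf sum_distrib_left[symmetric] c_def)
  also have "\<dots> \<le> (\<Sum>i\<in>S. h (p i))"
    by (rule sum_mono) (simp add: tangent p)
  finally show ?thesis by (simp add: c_def)
qed

text \<open>The factor a - 1 makes (a - 1) x^a convex for every a > 0, treating a < 1 and a > 1 alike.\<close>

lemma mean_powr_sign_le:
  fixes p :: "'i \<Rightarrow> real"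
  assumes "finite S" "S \<noteq> {}" "\<And>i. i \<in> S \<Longrightarrow> 0 \<le> p i" and "0 < a"
  shows "(a - 1) * (card S * (sum p S / card S) powr a) \<le> (a - 1) * (\<Sum>i\<in>S. p i powr a)"
proof -
  have "card S * ((a - 1) * (sum p S / card S) powr a) \<le> (\<Sum>i\<in>S. (a - 1) * p i powr a)"
  proof (rule card_mult_mean_le_sum_convex[where h' = "\<lambda>c. (a - 1) * (a * c powr (a - 1))"])
    show "convex_on {0<..} (\<lambda>x. (a - 1) * x powr a)"
    proof (rule f''_ge0_imp_convex[where f' = "\<lambda>x. (a - 1) * (a * x powr (a - 1))"
          and f'' = "\<lambda>x. (a - 1) * (a * ((a - 1) * x powr (a - 1 - 1)))"])
      fix x :: real assume "x \<in> {0<..}"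
      have "0 \<le> a * ((a - 1)^2 * x powr (a - 1 - 1))"
        using assms by simp
      then show "0 \<le> (a - 1) * (a * ((a - 1) * x powr (a - 1 - 1)))"
        by (simp add: power2_eq_square mult_ac)
    qed (auto intro!: derivative_eq_intros)
  next
    fix c :: real assume c: "0 < c"
    show "((\<lambda>x. (a - 1) * x powr a) has_real_derivative (a - 1) * (a * c powr (a - 1))) (at c)"
      using c by (auto intro!: derivative_eq_intros)
    have "c * c powr (a - 1) = c powr a" using c by (simp add: powr_mult_base)
    then have "(a - 1) * c powr a - c * ((a - 1) * (a * c powr (a - 1))) = - ((a - 1)^2 * c powr a)"
      by (simp add: algebra_simps power2_eq_square)
    then show "(a - 1) * c powr a - c * ((a - 1) * (a * c powr (a - 1))) \<le> (a - 1) * 0 powr a"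
      by simp
  qed (use assms in auto)
  then show ?thesis by (simp add: sum_distrib_left mult.left_commute)
qed

lemma log_sum_inequality_uniform:
  fixes p :: "'i \<Rightarrow> real"
  assumes "finite S" "S \<noteq> {}" "\<And>i. i \<in> S \<Longrightarrow> 0 \<le> p i"
  shows "sum p S * ln (sum p S / card S) \<le> (\<Sum>i\<in>S. p i * ln (p i))"
proof -
  have "card S * (sum p S / card S * ln (sum p S / card S)) \<le> (\<Sum>i\<in>S. p i * ln (p i))"
  proof (rule card_mult_mean_le_sum_convex[where h' = "\<lambda>c. ln c + 1"])
    show "convex_on {0<..} (\<lambda>x. x * ln x)"
      by (rule f''_ge0_imp_convex[where f' = "\<lambda>x. ln x + 1" and f'' = "\<lambda>x. 1 / x"])
        (auto intro!: derivative_eq_intros)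
  qed (use assms in \<open>auto intro!: derivative_eq_intros\<close>)
  then show ?thesis using assms by (simp add: card_gt_0_iff)
qed

lemma inverse_mult_ln_mono:
  fixes c x y :: real
  assumes "0 < x" "0 < y" "c * x \<le> c * y"
  shows "1 / c * ln x \<le> 1 / c * ln y"
proof (cases c "0 :: real" rule: linorder_cases)
  case less
  with assms have "ln y \<le> ln x" by (simp add: mult_le_cancel_left)
  with less show ?thesis by (simp add: divide_right_mono_neg)
next
  case greater
  with assms have "ln x \<le> ln y" by (simp add: mult_le_cancel_left)
  with greater show ?thesis by (simp add: divide_right_mono)
qed simp

lemma geometric_sum_le:
  fixes l x :: real
  assumes "0 \<le> l" "0 \<le> x" "x \<le> 1 / (l + 1)"
  shows "l * (\<Sum>k<n. x ^ Suc k) \<le> 1 - (1 / (l + 1)) ^ n"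
proof (induction n)
  case (Suc n)
  define y where "y = 1 / (l + 1)"
  have "x ^ Suc n \<le> y ^ Suc n"
    using assms by (intro power_mono) (simp_all add: y_def)
  then have "l * x ^ Suc n \<le> l * y ^ Suc n"
    using assms(1) by (rule mult_left_mono)
  also have "\<dots> = y ^ n * (1 - y)"
  proof -
    have "1 - y = l * y"
      using assms(1) by (simp add: y_def field_simps)
    then show ?thesis by simp
  qed
  finally show ?case
    using Suc.IH by (simp add: y_def algebra_simps)
qed simp

lemma prob_vec_sum_powr_pos:
  assumes "prob_vec M P"
  shows "0 < (\<Sum>m=1..M. P m powr \<alpha>)"
proof -
  obtain m where m: "m \<in> {1..M}" "P m \<noteq> 0"
    using assms unfolding prob_vec_def by (metis sum.neutral zero_neq_one)
  with assms have "0 < P m powr \<alpha>"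
    by (simp add: prob_vec_def)
  also have "\<dots> \<le> (\<Sum>m=1..M. P m powr \<alpha>)"
    using m by (intro member_le_sum) auto
  finally show ?thesis .
qed

lemma renyi_div_uniform_order:
  assumes "0 < \<alpha>" "\<alpha> \<noteq> 1" "0 < (\<Sum>m=1..M. P m powr \<alpha>)"
  shows "renyi_div (ereal \<alpha>) M P (uniform M)
    = 1 / (\<alpha> - 1) * ln (\<Sum>m=1..M. P m powr \<alpha>) + ln (real M)"
proof -
  have "0 < M"
    using assms(3) by (cases M) auto
  have "uniform M m powr (1 - \<alpha>) = real M powr (\<alpha> - 1)" for m
    using \<open>0 < M\<close> by (simp add: uniform_def powr_divide powr_minus_divide[symmetric])
  then have "(\<Sum>m=1..M. P m powr \<alpha> * uniform M m powr (1 - \<alpha>))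
      = real M powr (\<alpha> - 1) * (\<Sum>m=1..M. P m powr \<alpha>)"
    by (simp add: sum_distrib_left mult.commute)
  moreover have "ln (real M powr (\<alpha> - 1) * (\<Sum>m=1..M. P m powr \<alpha>))
      = (\<alpha> - 1) * ln (real M) + ln (\<Sum>m=1..M. P m powr \<alpha>)"
    using assms \<open>0 < M\<close> by (simp add: ln_mult ln_powr)
  ultimately show ?thesis
    using assms by (simp add: renyi_div_def field_simps)
qed

lemma renyi_div_uniform_one:
  assumes "prob_vec M P"
  shows "renyi_div 1 M P (uniform M) = (\<Sum>m=1..M. P m * ln (P m)) + ln (real M)"
proof -
  have "0 < M"
    using assms by (cases M) (auto simp: prob_vec_def)
  \<comment> \<open>since ln 0 = 0, the case P m = 0 needs no special treatment on the right\<close>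
  have "(if P m = 0 then 0 else P m * ln (P m / uniform M m)) = P m * ln (P m) + P m * ln (real M)"
    if "m \<in> {1..M}" for m
    using assms that \<open>0 < M\<close> by (auto simp: prob_vec_def uniform_def ln_mult algebra_simps)
  then have "renyi_div 1 M P (uniform M) = (\<Sum>m=1..M. P m * ln (P m) + P m * ln (real M))"
    by (simp add: renyi_div_def)
  also have "\<dots> = (\<Sum>m=1..M. P m * ln (P m)) + ln (real M)"
    using assms by (simp add: sum.distrib sum_distrib_right[symmetric] prob_vec_def)
  finally show ?thesis .
qed

lemma renyi_div_uniform_infinity:
  "renyi_div \<infinity> M P (uniform M) = ln (Max ((\<lambda>m. P m * real M) ` {1..M}))"
  by (simp add: renyi_div_def uniform_def)

lemma sum_split_head_tail:
  fixes f :: "nat \<Rightarrow> 'a::comm_monoid_add"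
  assumes "N \<le> M"
  shows "(\<Sum>m=1..M. f m) = (\<Sum>m=1..N. f m) + (\<Sum>m=Suc N..M. f m)"
proof -
  have "{1..M} = {1..N} \<union> {Suc N..M}" "{1..N} \<inter> {Suc N..M} = {}"
    using assms by auto
  then show ?thesis by (simp add: sum.union_disjoint)
qed

definition tail_mass_vecs :: "nat \<Rightarrow> nat \<Rightarrow> real \<Rightarrow> (nat \<Rightarrow> real) set" where
  "tail_mass_vecs N M q = {P. prob_vec M P \<and> (\<Sum>m=Suc N..M. P m) = q}"

locale two_blocks =
  fixes N M :: nat and q :: real
  assumes N_pos: "0 < N" and N_less_M: "N < M" and q_nonneg: "0 \<le> q" and q_less_1: "q < 1"
begin

abbreviation head :: real where "head \<equiv> (1 - q) / real N"
abbreviation tail :: real where "tail \<equiv> q / (real M - real N)"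

definition block_uniform :: "nat \<Rightarrow> real" where
  "block_uniform m = (if m \<le> N then head else tail)"

lemma head_pos: "0 < head"
  using N_pos q_less_1 by simp

lemma tail_nonneg: "0 \<le> tail"
  using N_less_M q_nonneg by simp

lemma real_card_tail: "real (card {Suc N..M}) = real M - real N"
  using N_less_M by simp

lemmas sum_blocks = sum_split_head_tail[OF less_imp_le[OF N_less_M]]

lemma sum_block_uniform:
  "(\<Sum>m=1..M. g (block_uniform m)) = real N * g head + (real M - real N) * g tail"
proof -
  have "(\<Sum>m=1..N. g (block_uniform m)) = real N * g head"
    by (simp add: block_uniform_def)
  moreover have "(\<Sum>m=Suc N..M. g (block_uniform m)) = (\<Sum>m=Suc N..M. g tail)"
    by (rule sum.cong) (auto simp: block_uniform_def)
  ultimately show ?thesis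
    unfolding sum_blocks[of "\<lambda>m. g (block_uniform m)"] using N_less_M by (simp add: of_nat_diff)
qed

lemma block_uniform_mem: "block_uniform \<in> tail_mass_vecs N M q"
proof -
  have "(\<Sum>m=Suc N..M. block_uniform m) = q"
    using sum.cong[of "{Suc N..M}" _ block_uniform "\<lambda>_. tail"] N_less_M
    by (simp add: block_uniform_def real_card_tail)
  moreover have "(\<Sum>m=1..M. block_uniform m) = 1"
    using sum_block_uniform[of "\<lambda>x. x"] N_pos N_less_M by simp
  ultimately show ?thesis
    using head_pos tail_nonneg
    by (auto simp: tail_mass_vecs_def prob_vec_def block_uniform_def less_imp_le)
qed

lemma tail_mass_vecs_nonneg: "P \<in> tail_mass_vecs N M q \<Longrightarrow> m \<in> {1..M} \<Longrightarrow> 0 \<le> P m"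
  by (simp add: tail_mass_vecs_def prob_vec_def)

lemma tail_mass_vecs_head_sum: "P \<in> tail_mass_vecs N M q \<Longrightarrow> (\<Sum>m=1..N. P m) = 1 - q"
  using sum_blocks[of P] by (simp add: tail_mass_vecs_def prob_vec_def)

lemma renyi_order_min:
  assumes "0 < \<alpha>" "\<alpha> \<noteq> 1"
  shows "is_min_val (\<lambda>P. renyi_div (ereal \<alpha>) M P (uniform M)) (tail_mass_vecs N M q)
    (1 / (\<alpha> - 1) * ln (real N * head powr \<alpha> + (real M - real N) * tail powr \<alpha>) + ln (real M))"
proof -
  let ?T = "real N * head powr \<alpha> + (real M - real N) * tail powr \<alpha>"
  have "0 < real N * head powr \<alpha>" "0 \<le> (real M - real N) * tail powr \<alpha>"
    using head_pos N_pos N_less_M q_less_1 by simp_all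
  then have T_pos: "0 < ?T" by linarith
  have "renyi_div (ereal \<alpha>) M block_uniform (uniform M) = 1 / (\<alpha> - 1) * ln ?T + ln (real M)"
    using renyi_div_uniform_order[OF assms] sum_block_uniform[of "\<lambda>x. x powr \<alpha>"] T_pos by simp
  moreover have "1 / (\<alpha> - 1) * ln ?T + ln (real M) \<le> renyi_div (ereal \<alpha>) M P (uniform M)"
    if P: "P \<in> tail_mass_vecs N M q" for P
  proof -
    let ?S = "\<Sum>m=1..M. P m powr \<alpha>"
    have nonneg: "\<And>m. m \<in> {1..M} \<Longrightarrow> 0 \<le> P m"
      using tail_mass_vecs_nonneg[OF P] .
    have "(\<alpha> - 1) * (real N * head powr \<alpha>) \<le> (\<alpha> - 1) * (\<Sum>m=1..N. P m powr \<alpha>)"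
      using mean_powr_sign_le[of "{1..N}" P \<alpha>] nonneg N_pos N_less_M tail_mass_vecs_head_sum[OF P] assms
      by simp
    moreover have "(\<alpha> - 1) * ((real M - real N) * tail powr \<alpha>) \<le> (\<alpha> - 1) * (\<Sum>m=Suc N..M. P m powr \<alpha>)"
      using mean_powr_sign_le[of "{Suc N..M}" P \<alpha>] nonneg N_less_M P assms
      by (simp add: tail_mass_vecs_def real_card_tail)
    ultimately have "(\<alpha> - 1) * ?T \<le> (\<alpha> - 1) * ?S"
      unfolding sum_blocks[of "\<lambda>m. P m powr \<alpha>"] distrib_left by linarith
    moreover have "0 < ?S"
      using P prob_vec_sum_powr_pos by (simp add: tail_mass_vecs_def)
    ultimately show ?thesis
      using inverse_mult_ln_mono[OF T_pos] renyi_div_uniform_order[OF assms] by simp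
  qed
  ultimately show ?thesis
    unfolding is_min_val_def using block_uniform_mem by metis
qed

lemma renyi_one_min:
  "is_min_val (\<lambda>P. renyi_div 1 M P (uniform M)) (tail_mass_vecs N M q)
    ((1 - q) * ln head + q * ln tail + ln (real M))"
proof -
  have "renyi_div 1 M block_uniform (uniform M) = (1 - q) * ln head + q * ln tail + ln (real M)"
    using renyi_div_uniform_one block_uniform_mem sum_block_uniform[of "\<lambda>x. x * ln x"] N_pos N_less_M
    by (simp add: tail_mass_vecs_def)
  moreover have "(1 - q) * ln head + q * ln tail + ln (real M) \<le> renyi_div 1 M P (uniform M)"
    if P: "P \<in> tail_mass_vecs N M q" for P
  proof -
    have nonneg: "\<And>m. m \<in> {1..M} \<Longrightarrow> 0 \<le> P m"
      using tail_mass_vecs_nonneg[OF P] .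
    have "(1 - q) * ln head \<le> (\<Sum>m=1..N. P m * ln (P m))"
      using log_sum_inequality_uniform[of "{1..N}" P] nonneg N_pos N_less_M tail_mass_vecs_head_sum[OF P]
      by simp
    moreover have "q * ln tail \<le> (\<Sum>m=Suc N..M. P m * ln (P m))"
      using log_sum_inequality_uniform[of "{Suc N..M}" P] nonneg N_less_M P
      by (simp add: tail_mass_vecs_def real_card_tail)
    ultimately show ?thesis
      using renyi_div_uniform_one P sum_blocks[of "\<lambda>m. P m * ln (P m)"]
      by (simp add: tail_mass_vecs_def)
  qed
  ultimately show ?thesis
    unfolding is_min_val_def using block_uniform_mem by metis
qed

lemma renyi_infinity_min:
  assumes "tail \<le> head"
  shows "is_min_val (\<lambda>P. renyi_div \<infinity> M P (uniform M)) (tail_mass_vecs N M q) (ln head + ln (real M))"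
proof -
  have M_pos: "0 < real M"
    using N_less_M by simp
  have "tail * real M \<le> head * real M"
    using assms M_pos by (intro mult_right_mono) auto
  then have "Max ((\<lambda>m. block_uniform m * real M) ` {1..M}) = head * real M"
  proof (intro Max_eqI)
    show "y \<le> head * real M" if "tail * real M \<le> head * real M"
      and "y \<in> (\<lambda>m. block_uniform m * real M) ` {1..M}" for y
      using that by (auto simp: block_uniform_def)
    show "head * real M \<in> (\<lambda>m. block_uniform m * real M) ` {1..M}"
      using N_pos N_less_M by (auto simp: block_uniform_def image_iff intro!: bexI[of _ 1])
  qed simp
  then have "renyi_div \<infinity> M block_uniform (uniform M) = ln (head * real M)"
    by (simp only: renyi_div_uniform_infinity)
  also have "\<dots> = ln head + ln (real M)"
    using head_pos M_pos by (rule ln_mult_pos)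
  finally have "renyi_div \<infinity> M block_uniform (uniform M) = ln head + ln (real M)" .
  moreover have "ln head + ln (real M) \<le> renyi_div \<infinity> M P (uniform M)"
    if P: "P \<in> tail_mass_vecs N M q" for P
  proof -
    obtain m where m: "m \<in> {1..N}" "head \<le> P m"
    proof (rule ccontr)
      assume "\<not> thesis"
      then have "\<And>m. m \<in> {1..N} \<Longrightarrow> P m < head"
        using that by force
      then have "(\<Sum>m=1..N. P m) < (\<Sum>m=1..N. head)"
        using N_pos by (intro sum_strict_mono) auto
      then show False
        using tail_mass_vecs_head_sum[OF P] N_pos by simp
    qed
    have "head * real M \<le> P m * real M"
      using m M_pos by (intro mult_right_mono) auto
    also have "\<dots> \<le> Max ((\<lambda>m. P m * real M) ` {1..M})"
      using m N_less_M by (intro Max_ge) auto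
    finally have "ln (head * real M) \<le> ln (Max ((\<lambda>m. P m * real M) ` {1..M}))"
      using mult_pos_pos[OF head_pos M_pos] by (rule ln_mono)
    then show ?thesis
      using ln_mult_pos[OF head_pos M_pos] by (simp only: renyi_div_uniform_infinity)
  qed
  ultimately show ?thesis
    unfolding is_min_val_def using block_uniform_mem by metis
qed

end

lemma feasible_eq_tail_mass_vecs:
  assumes "0 < L" "N \<le> M"
  shows "feasible N L M D = tail_mass_vecs N M (real L * (D - 1))"
proof -
  have "(\<Sum>m=1..M. P m * dvec N L m) = real L * (\<Sum>m=1..M. P m) + (\<Sum>m=Suc N..M. P m)" for P
  proof -
    have "(\<Sum>m=1..M. P m * dvec N L m)
        = (\<Sum>m=1..N. P m * dvec N L m) + (\<Sum>m=Suc N..M. P m * dvec N L m)"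
      by (rule sum_split_head_tail[OF assms(2)])
    also have "\<dots> = (\<Sum>m=1..N. real L * P m) + (\<Sum>m=Suc N..M. real L * P m + P m)"
      by (intro arg_cong2[where f = "(+)"] sum.cong) (auto simp: dvec_def algebra_simps)
    also have "\<dots> = real L * ((\<Sum>m=1..N. P m) + (\<Sum>m=Suc N..M. P m)) + (\<Sum>m=Suc N..M. P m)"
      by (simp add: sum.distrib sum_distrib_left algebra_simps)
    also have "\<dots> = real L * (\<Sum>m=1..M. P m) + (\<Sum>m=Suc N..M. P m)"
      by (simp only: sum_split_head_tail[OF assms(2), symmetric])
    finally show ?thesis .
  qed
  then show ?thesis
    using assms(1) by (auto simp: feasible_def tail_mass_vecs_def prob_vec_def field_simps)
qed

lemma tail_mass_bound:
  fixes L N K :: nat and D :: real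
  assumes "L + 1 \<le> N" "1 \<le> K" "D \<le> (\<Sum>k<K. 1 / real N ^ k)"
  shows "real L * (D - 1) * (real N * (real L + 1) ^ (K - 1))
    \<le> real N * (real L + 1) ^ (K - 1) - real N"
proof -
  have "D - 1 \<le> (\<Sum>k<K - 1. (1 / real N) ^ Suc k)"
    using assms(2,3) sum.lessThan_Suc_shift[of "\<lambda>k. (1 / real N) ^ k" "K - 1"]
    by (simp add: power_one_over)
  then have "real L * (D - 1) \<le> real L * (\<Sum>k<K - 1. (1 / real N) ^ Suc k)"
    by (rule mult_left_mono) simp
  also have "\<dots> \<le> 1 - (1 / (real L + 1)) ^ (K - 1)"
    using assms(1) by (intro geometric_sum_le) (auto simp: frac_le)
  finally have "real L * (D - 1) * (real N * (real L + 1) ^ (K - 1))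
      \<le> (1 - (1 / (real L + 1)) ^ (K - 1)) * (real N * (real L + 1) ^ (K - 1))"
    by (rule mult_right_mono) simp
  also have "\<dots> = real N * (real L + 1) ^ (K - 1) - real N"
    by (simp add: field_simps power_one_over)
  finally show ?thesis .
qed

theorem theorem2:
  fixes N K L :: nat and D :: real
  assumes "N \<ge> 3" and "K \<ge> 2" and "1 \<le> L" and "L < N - 1"
  defines "M \<equiv> N * (L + 1) ^ (K - 1)"
  defines "C \<equiv> 1 / (\<Sum>k<K. 1 / real N ^ k)"
  assumes "1 \<le> D" and "D \<le> 1 / C"
  shows
    "(\<forall>\<alpha>::real. 0 < \<alpha> \<and> \<alpha> \<noteq> 1 \<longrightarrow>
        is_min_val (\<lambda>P. renyi_div (ereal \<alpha>) M P (uniform M)) (feasible N L M D)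
          (1 / (\<alpha> - 1) *
             ln (real N * ((1 - real L * (D - 1)) / real N) powr \<alpha>
                 + (real M - real N) * ((real L * (D - 1)) / (real M - real N)) powr \<alpha>)
           + ln (real M)))
     \<and> is_min_val (\<lambda>P. renyi_div 1 M P (uniform M)) (feasible N L M D)
          ((1 - real L * (D - 1)) * ln ((1 - real L * (D - 1)) / real N)
           + (if real L * (D - 1) = 0 then 0
              else real L * (D - 1) * ln ((real L * (D - 1)) / (real M - real N)))
           + ln (real M))
     \<and> is_min_val (\<lambda>P. renyi_div \<infinity> M P (uniform M)) (feasible N L M D)
          (ln ((1 - real L * (D - 1)) / real N) + ln (real M))"
proof -
  define q where "q = real L * (D - 1)"
  have "(L + 1) ^ 1 \<le> (L + 1) ^ (K - 1)"
    using assms(2) by (intro power_increasing) auto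
  with assms(3) have "2 \<le> (L + 1) ^ (K - 1)"
    by simp
  then have N_less_M: "N < M"
    using assms(1) by (simp add: M_def)
  have "L + 1 \<le> N" "1 \<le> K" "D \<le> (\<Sum>k<K. 1 / real N ^ k)"
    using assms(2,4,8) by (auto simp: C_def)
  then have bound: "q * real M \<le> real M - real N"
    unfolding q_def M_def of_nat_mult of_nat_power of_nat_add of_nat_1 by (rule tail_mass_bound)
  have "q * real M < 1 * real M"
    using bound assms(1) by simp
  then have "q < 1"
    by (rule mult_right_less_imp_less) simp
  interpret two_blocks N M q
    by unfold_locales (use assms(1,3,7) N_less_M \<open>q < 1\<close> in \<open>auto simp: q_def\<close>)
  have "tail \<le> head"
    using bound N_pos N_less_M by (simp add: field_simps)
  moreover have "feasible N L M D = tail_mass_vecs N M q"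
    using assms(3) N_less_M by (simp add: feasible_eq_tail_mass_vecs q_def)
  moreover have "(if q = 0 then 0 else q * ln tail) = q * ln tail"
    by simp
  ultimately show ?thesis
    unfolding q_def[symmetric]
    using renyi_order_min renyi_one_min renyi_infinity_min by auto
qed

end
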